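(* Let $\mathsf V$ be a quantale, $X=(X,a)$ a $\mathsf V$-category and $s=(x_n)_{n\in\mathbb N}$ a Cauchy sequence in $X$. Put $\widetilde s=(x_n^* )_{n\in\mathbb N}$, a sequence in $[X^{\mathrm{op}},\mathsf V]$. Then $\widetilde s$ converges to $\psi_s$ in $[X^{\mathrm{op}},\mathsf V]$. If moreover $k=\top$ is the top element of $\mathsf V$, then for every $\psi\in[X^{\mathrm{op}},\mathsf V]$, if $\widetilde s$ converges to $\psi$ then $\psi=\psi_s$.
   Context: A quantale $(\mathsf V,\otimes,k)$ is a complete anti-symmetric lattice with an associative, commutative operation $\otimes$ with neutral element $k$ distributing over arbitrary suprema; $\hom(u,-)$ is the right adjoint of $u\otimes-$. A $\mathsf V$-category $(X,a)$ is a set with $a:X\times X\to\mathsf V$ such that $k\le a(x,x)$ and $a(x,y)\otimes a(y,z)\le a(x,z)$. $[X^{\mathrm{op}},\mathsf V]$ is the $\mathsf V$-category whose elements are the maps $\psi:X\to\mathsf V$ with $a(x,x')\otimes\psi(x')\le\psi(x)$ (i.e. $\mathsf V$-modules $X\rightharpoonup E$), with structure $[\psi,\psi']=\bigwedge_{x\in X}\hom(\psi(x),\psi'(x))$. For $x\in X$, $x^*\in[X^{\mathrm{op}},\mathsf V]$ is $y\mapsto a(y,x)$. For a sequence $s=(x_n)$: $\mathrm{Cauchy}(s)=\bigvee_N\bigwedge_{n,m\ge N}a(x_n,x_m)$, $s$ is Cauchy if $k\le\mathrm{Cauchy}(s)$; $\psi_s(y)=\bigvee_N\bigwedge_{n\ge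 N}a(y,x_n)$. In a $\mathsf V$-category $(Z,c)$, for $M\subseteq Z$, $\overline M=\{z\mid k\le\bigvee_{y\in M}c(z,y)\otimes c(y,z)\}$, and a sequence $(z_n)$ converges to $z$ if $z\in\overline{\{z_n\mid n\in M\}}$ for every infinite $M\subseteq\mathbb N$. *)

theory Defs
  imports Main
begin

definition quantale :: "('v::complete_lattice \<Rightarrow> 'v \<Rightarrow> 'v) \<Rightarrow> 'v \<Rightarrow> bool" where
  "quantale t k \<longleftrightarrow>
     (\<forall>u v w. t (t u v) w = t u (t v w)) \<and>
     (\<forall>u v. t u v = t v u) \<and>
     (\<forall>u. t k u = u) \<and>
     (\<forall>u S. t u (Sup S) = (SUP v\<in>S. t u v))"

definition qhom :: "('v::complete_lattice \<Rightarrow> 'v \<Rightarrow> 'v) \<Rightarrow> 'v \<Rightarrow> 'v \<Rightarrow> 'v" where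
  "qhom t u v = Sup {w. t u w \<le> v}"

definition vcat :: "('v::complete_lattice \<Rightarrow> 'v \<Rightarrow> 'v) \<Rightarrow> 'v \<Rightarrow> 'x set \<Rightarrow> ('x \<Rightarrow> 'x \<Rightarrow> 'v) \<Rightarrow> bool" where
  "vcat t k X a \<longleftrightarrow>
     (\<forall>x\<in>X. k \<le> a x x) \<and>
     (\<forall>x\<in>X. \<forall>y\<in>X. \<forall>z\<in>X. t (a x y) (a y z) \<le> a x z)"

text \<open>Carrier of [X^op, V]; maps are taken extensional (value bot outside X).\<close>
definition presheaves :: "('v::complete_lattice \<Rightarrow> 'v \<Rightarrow> 'v) \<Rightarrow> 'x set \<Rightarrow> ('x \<Rightarrow> 'x \<Rightarrow> 'v) \<Rightarrow> ('x \<Rightarrow> 'v) set" where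
  "presheaves t X a = {\<psi>. (\<forall>x\<in>X. \<forall>x'\<in>X. t (a x x') (\<psi> x') \<le> \<psi> x) \<and> (\<forall>x. x \<notin> X \<longrightarrow> \<psi> x = bot)}"

definition psh_hom :: "('v::complete_lattice \<Rightarrow> 'v \<Rightarrow> 'v) \<Rightarrow> 'x set \<Rightarrow> ('x \<Rightarrow> 'v) \<Rightarrow> ('x \<Rightarrow> 'v) \<Rightarrow> 'v" where
  "psh_hom t X \<psi> \<psi>' = (INF x\<in>X. qhom t (\<psi> x) (\<psi>' x))"

definition yoneda :: "'x set \<Rightarrow> ('x \<Rightarrow> 'x \<Rightarrow> 'v::complete_lattice) \<Rightarrow> 'x \<Rightarrow> 'x \<Rightarrow> 'v" where
  "yoneda X a x = (\<lambda>y. if y \<in> X then a y x else bot)"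

definition cauchy_val :: "('x \<Rightarrow> 'x \<Rightarrow> 'v::complete_lattice) \<Rightarrow> (nat \<Rightarrow> 'x) \<Rightarrow> 'v" where
  "cauchy_val a s = (SUP N. INF n\<in>{N..}. INF m\<in>{N..}. a (s n) (s m))"

definition psi_seq :: "'x set \<Rightarrow> ('x \<Rightarrow> 'x \<Rightarrow> 'v::complete_lattice) \<Rightarrow> (nat \<Rightarrow> 'x) \<Rightarrow> 'x \<Rightarrow> 'v" where
  "psi_seq X a s = (\<lambda>y. if y \<in> X then (SUP N. INF n\<in>{N..}. a y (s n)) else bot)"

definition vclosure :: "('v::complete_lattice \<Rightarrow> 'v \<Rightarrow> 'v) \<Rightarrow> 'v \<Rightarrow> 'z set \<Rightarrow> ('z \<Rightarrow> 'z \<Rightarrow> 'v) \<Rightarrow> 'z set \<Rightarrow> 'z set" where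
  "vclosure t k Z c M = {z\<in>Z. k \<le> (SUP y\<in>M. t (c z y) (c y z))}"

definition vconverges :: "('v::complete_lattice \<Rightarrow> 'v \<Rightarrow> 'v) \<Rightarrow> 'v \<Rightarrow> 'z set \<Rightarrow> ('z \<Rightarrow> 'z \<Rightarrow> 'v) \<Rightarrow> (nat \<Rightarrow> 'z) \<Rightarrow> 'z \<Rightarrow> bool" where
  "vconverges t k Z c zs z \<longleftrightarrow> (\<forall>M::nat set. infinite M \<longrightarrow> z \<in> vclosure t k Z c (zs ` M))"

end

theory Submission
  imports Defs "HOL-Library.Infinite_Set"
begin

text \<open>
  Write \<open>c N\<close> for the infimum of \<open>a(x\<^sub>n, x\<^sub>m)\<close> over \<open>n, m \<ge> N\<close>, so that \<open>k \<le> \<Squnion>\<^sub>N c N\<close>.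
  For \<open>n \<ge> N\<close> the triangle inequality gives \<open>c N \<le> [x\<^sub>n\<^sup>*, \<psi>\<^sub>s]\<close> and \<open>c N \<le> [\<psi>\<^sub>s, x\<^sub>n\<^sup>*]\<close>;
  since every infinite set of indices contains arbitrarily large \<open>n\<close>, this yields
  \<open>k \<le> \<Squnion>\<^sub>N c N \<otimes> \<Squnion>\<^sub>N c N \<le> \<Squnion>\<^sub>n\<^sub>\<in>\<^sub>M [\<psi>\<^sub>s, x\<^sub>n\<^sup>*] \<otimes> [x\<^sub>n\<^sup>*, \<psi>\<^sub>s]\<close>.
  If \<open>k = \<top>\<close>, then \<open>u \<otimes> v \<le> u\<close>, so convergence to \<open>\<psi>\<close> forces both
  \<open>\<Squnion>\<^sub>n\<^sub>\<ge>\<^sub>N [\<psi>, x\<^sub>n\<^sup>*]\<close> and \<open>\<Squnion>\<^sub>n\<^sub>\<ge>\<^sub>N [x\<^sub>n\<^sup>*, \<psi>]\<close> to be \<open>\<top>\<close>; composing with the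
  estimates above gives \<open>[\<psi>, \<psi>\<^sub>s] = [\<psi>\<^sub>s, \<psi>] = \<top>\<close>, hence \<open>\<psi> = \<psi>\<^sub>s\<close>.
\<close>

lemma quantale_assoc: "quantale t k \<Longrightarrow> t (t u v) w = t u (t v w)"
  unfolding quantale_def by blast

lemma quantale_commute: "quantale t k \<Longrightarrow> t u v = t v u"
  unfolding quantale_def by blast

lemma quantale_unit: "quantale t k \<Longrightarrow> t k u = u"
  by (simp add: quantale_def)

lemma quantale_SUP: "quantale t k \<Longrightarrow> t u (SUP i\<in>I. f i) = (SUP i\<in>I. t u (f i))"
  unfolding quantale_def by (metis image_image)

lemma quantale_SUP_SUP:
  assumes "quantale t k"
  shows "t (SUP i\<in>I. f i) (SUP j\<in>J. g j) = (SUP i\<in>I. SUP j\<in>J. t (f i) (g j))"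
proof -
  have "t (SUP i\<in>I. f i) (SUP j\<in>J. g j) = (SUP j\<in>J. t (SUP i\<in>I. f i) (g j))"
    by (rule quantale_SUP[OF assms])
  also have "\<dots> = (SUP j\<in>J. SUP i\<in>I. t (f i) (g j))"
  proof (rule SUP_cong)
    fix j
    have "t (SUP i\<in>I. f i) (g j) = t (g j) (SUP i\<in>I. f i)"
      by (rule quantale_commute[OF assms])
    also have "\<dots> = (SUP i\<in>I. t (g j) (f i))"
      by (rule quantale_SUP[OF assms])
    also have "\<dots> = (SUP i\<in>I. t (f i) (g j))"
      by (rule SUP_cong[OF refl quantale_commute[OF assms]])
    finally show "t (SUP i\<in>I. f i) (g j) = (SUP i\<in>I. t (f i) (g j))" .
  qed simp
  finally show ?thesis
    by (rule trans[OF _ SUP_commute])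
qed

lemma quantale_mono_right:
  assumes "quantale t k" and "v \<le> w"
  shows "t u v \<le> t u w"
proof -
  have "t u w = sup (t u v) (t u w)"
    using quantale_SUP[OF assms(1), of u id "{v, w}"] assms(2) by (simp add: sup_absorb2)
  then show ?thesis
    by (metis sup_ge1)
qed

lemma quantale_mono:
  assumes "quantale t k" and "u \<le> u'" and "v \<le> v'"
  shows "t u v \<le> t u' v'"
  by (metis assms quantale_commute quantale_mono_right order_trans)

lemma quantale_tensor_le_left:
  assumes "quantale t k" and "k = top"
  shows "t u v \<le> u"
  by (metis assms quantale_commute quantale_mono_right quantale_unit top_greatest)

lemma le_SUP_tensor_if_SUP_top:
  assumes "quantale t k" and "k = top"
    and "(SUP i\<in>I. f i) = top" and "\<And>i. i \<in> I \<Longrightarrow> c \<le> g i"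
  shows "c \<le> (SUP i\<in>I. t (f i) (g i))"
proof -
  have "c = t (SUP i\<in>I. f i) c"
    using assms(1-3) quantale_unit by metis
  also have "\<dots> = (SUP i\<in>I. t (f i) c)"
    using quantale_SUP[OF assms(1), of c f I] quantale_commute[OF assms(1)] by simp
  also have "\<dots> \<le> (SUP i\<in>I. t (f i) (g i))"
    using assms(4) by (intro SUP_mono) (blast intro: quantale_mono_right[OF assms(1)])
  finally show ?thesis .
qed

lemma qhom_eval:
  assumes "quantale t k"
  shows "t u (qhom t u v) \<le> v"
  using quantale_SUP[OF assms, of u id "{w. t u w \<le> v}"] unfolding qhom_def
  by (simp add: SUP_le_iff)

lemma le_qhom: "t u w \<le> v \<Longrightarrow> w \<le> qhom t u v"
  unfolding qhom_def by (simp add: Sup_upper)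

lemma psh_hom_greatest:
  assumes "\<And>x. x \<in> X \<Longrightarrow> t (\<phi> x) w \<le> \<chi> x"
  shows "w \<le> psh_hom t X \<phi> \<chi>"
  unfolding psh_hom_def using assms by (auto intro!: INF_greatest le_qhom)

lemma psh_hom_eval:
  assumes "quantale t k" and "x \<in> X"
  shows "t (\<phi> x) (psh_hom t X \<phi> \<chi>) \<le> \<chi> x"
proof -
  have "psh_hom t X \<phi> \<chi> \<le> qhom t (\<phi> x) (\<chi> x)"
    unfolding psh_hom_def using assms(2) by (rule INF_lower)
  then show ?thesis
    by (meson assms(1) qhom_eval quantale_mono_right order_trans)
qed

lemma psh_hom_trans:
  assumes "quantale t k"
  shows "t (psh_hom t X \<phi> \<chi>) (psh_hom t X \<chi> \<omega>) \<le> psh_hom t X \<phi> \<omega>"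
proof (rule psh_hom_greatest)
  fix x assume x: "x \<in> X"
  have "t (\<phi> x) (t (psh_hom t X \<phi> \<chi>) (psh_hom t X \<chi> \<omega>))
      = t (t (\<phi> x) (psh_hom t X \<phi> \<chi>)) (psh_hom t X \<chi> \<omega>)"
    using quantale_assoc[OF assms] by simp
  also have "\<dots> \<le> t (\<chi> x) (psh_hom t X \<chi> \<omega>)"
    using quantale_mono[OF assms psh_hom_eval[OF assms x] order_refl] .
  also have "\<dots> \<le> \<omega> x"
    using psh_hom_eval[OF assms x] .
  finally show "t (\<phi> x) (t (psh_hom t X \<phi> \<chi>) (psh_hom t X \<chi> \<omega>)) \<le> \<omega> x" .
qed

lemma psh_hom_top_le:
  assumes "quantale t k" and "k = top" and "x \<in> X" and "psh_hom t X \<phi> \<chi> = top"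
  shows "\<phi> x \<le> \<chi> x"
  using psh_hom_eval[OF assms(1,3), of \<phi> \<chi>] assms(1,2,4) quantale_commute quantale_unit by metis

lemma presheaves_eqI:
  assumes "quantale t k" and "k = top" and "\<phi> \<in> presheaves t X a" and "\<chi> \<in> presheaves t X a"
    and "psh_hom t X \<phi> \<chi> = top" and "psh_hom t X \<chi> \<phi> = top"
  shows "\<phi> = \<chi>"
proof
  fix x show "\<phi> x = \<chi> x"
  proof (cases "x \<in> X")
    case True
    show ?thesis
      using psh_hom_top_le[OF assms(1,2) True assms(5)] psh_hom_top_le[OF assms(1,2) True assms(6)]
      by (rule order.antisym)
  next
    case False
    then show ?thesis
      using assms(3,4) unfolding presheaves_def by (metis (mono_tags, lifting) mem_Collect_eq)
  qed
qed

lemma vconverges_top_SUP_tail: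
  assumes "quantale t k" and "k = top" and "vconverges t k Z c zs z"
  shows "(SUP n\<in>{N..}. c z (zs n)) = top" and "(SUP n\<in>{N..}. c (zs n) z) = top"
proof -
  have "top \<le> (SUP w\<in>zs ` {N..}. t (c z w) (c w z))"
    using assms(2,3) infinite_Ici[of N] unfolding vconverges_def vclosure_def by blast
  then have tail: "top \<le> (SUP n\<in>{N..}. t (c z (zs n)) (c (zs n) z))"
    by (simp add: image_comp)
  have "(SUP n\<in>{N..}. t (c z (zs n)) (c (zs n) z)) \<le> (SUP n\<in>{N..}. c z (zs n))"
    by (intro SUP_mono) (use quantale_tensor_le_left[OF assms(1,2)] in blast)
  then show "(SUP n\<in>{N..}. c z (zs n)) = top"
    using tail by (simp add: top_le)
  have "(SUP n\<in>{N..}. t (c z (zs n)) (c (zs n) z)) \<le> (SUP n\<in>{N..}. c (zs n) z)"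
    by (intro SUP_mono)
      (metis quantale_tensor_le_left[OF assms(1,2)] quantale_commute[OF assms(1)] order_refl)
  then show "(SUP n\<in>{N..}. c (zs n) z) = top"
    using tail by (simp add: top_le)
qed

definition cauchy_tail :: "('x \<Rightarrow> 'x \<Rightarrow> 'v::complete_lattice) \<Rightarrow> (nat \<Rightarrow> 'x) \<Rightarrow> nat \<Rightarrow> 'v" where
  "cauchy_tail a s N = (INF n\<in>{N..}. INF m\<in>{N..}. a (s n) (s m))"

lemma cauchy_val_eq_SUP_cauchy_tail: "cauchy_val a s = (SUP N. cauchy_tail a s N)"
  unfolding cauchy_val_def cauchy_tail_def ..

lemma cauchy_tail_mono: "N \<le> N' \<Longrightarrow> cauchy_tail a s N \<le> cauchy_tail a s N'"
  unfolding cauchy_tail_def by (intro INF_superset_mono) (auto intro!: INF_superset_mono)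

lemma cauchy_tail_le: "N \<le> n \<Longrightarrow> N \<le> m \<Longrightarrow> cauchy_tail a s N \<le> a (s n) (s m)"
  unfolding cauchy_tail_def by (meson INF_lower atLeast_iff order_trans)

lemma psi_seq_apply: "x \<in> X \<Longrightarrow> psi_seq X a s x = (SUP K. INF m\<in>{K..}. a x (s m))"
  unfolding psi_seq_def by simp

lemma yoneda_apply: "x \<in> X \<Longrightarrow> yoneda X a y x = a x y"
  unfolding yoneda_def by simp

lemma psi_seq_in_presheaves:
  assumes q: "quantale t k" and "vcat t k X a" and sX: "\<And>n. s n \<in> X"
  shows "psi_seq X a s \<in> presheaves t X a"
  unfolding presheaves_def
proof (intro CollectI conjI ballI allI impI)
  have trans: "\<And>x y z. x \<in> X \<Longrightarrow> y \<in> X \<Longrightarrow> z \<in> X \<Longrightarrow> t (a x y) (a y z) \<le> a x z"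
    using assms(2) unfolding vcat_def by blast
  fix x x' assume x: "x \<in> X" and x': "x' \<in> X"
  have "t (a x x') (INF m\<in>{K..}. a x' (s m)) \<le> (INF m\<in>{K..}. a x (s m))" for K
  proof (rule INF_greatest)
    fix m assume "m \<in> {K..}"
    then have "t (a x x') (INF m\<in>{K..}. a x' (s m)) \<le> t (a x x') (a x' (s m))"
      by (intro quantale_mono_right[OF q] INF_lower)
    also have "\<dots> \<le> a x (s m)"
      using trans x x' sX by blast
    finally show "t (a x x') (INF m\<in>{K..}. a x' (s m)) \<le> a x (s m)" .
  qed
  then show "t (a x x') (psi_seq X a s x') \<le> psi_seq X a s x"
    by (simp add: psi_seq_apply x x' quantale_SUP[OF q] SUP_mono')
qed (simp add: psi_seq_def)

lemma cauchy_tail_le_psh_hom_yoneda_psi_seq: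
  assumes q: "quantale t k" and "vcat t k X a" and sX: "\<And>n. s n \<in> X" and "N \<le> n"
  shows "cauchy_tail a s N \<le> psh_hom t X (yoneda X a (s n)) (psi_seq X a s)"
proof (rule psh_hom_greatest)
  fix x assume x: "x \<in> X"
  have "t (a x (s n)) (cauchy_tail a s N) \<le> (INF m\<in>{N..}. a x (s m))"
  proof (rule INF_greatest)
    fix m assume "m \<in> {N..}"
    then have "t (a x (s n)) (cauchy_tail a s N) \<le> t (a x (s n)) (a (s n) (s m))"
      using assms(4) by (intro quantale_mono_right[OF q] cauchy_tail_le) auto
    also have "\<dots> \<le> a x (s m)"
      using assms(2) x sX unfolding vcat_def by blast
    finally show "t (a x (s n)) (cauchy_tail a s N) \<le> a x (s m)" .
  qed
  also have "\<dots> \<le> psi_seq X a s x"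
    using x by (auto simp: psi_seq_apply intro: SUP_upper)
  finally show "t (yoneda X a (s n) x) (cauchy_tail a s N) \<le> psi_seq X a s x"
    using x by (simp add: yoneda_apply)
qed

lemma cauchy_tail_le_psh_hom_psi_seq_yoneda:
  assumes q: "quantale t k" and "vcat t k X a" and sX: "\<And>n. s n \<in> X" and "N \<le> n"
  shows "cauchy_tail a s N \<le> psh_hom t X (psi_seq X a s) (yoneda X a (s n))"
proof (rule psh_hom_greatest)
  fix x assume x: "x \<in> X"
  have "t (cauchy_tail a s N) (INF m\<in>{K..}. a x (s m)) \<le> a x (s n)" for K
  proof -
    define m where "m = max K N"
    have "t (cauchy_tail a s N) (INF m\<in>{K..}. a x (s m)) \<le> t (a (s m) (s n)) (a x (s m))"
      using assms(4) unfolding m_def by (intro quantale_mono[OF q] cauchy_tail_le INF_lower) auto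
    also have "\<dots> = t (a x (s m)) (a (s m) (s n))"
      using quantale_commute[OF q] by simp
    also have "\<dots> \<le> a x (s n)"
      using assms(2) x sX unfolding vcat_def by blast
    finally show ?thesis .
  qed
  then have "t (cauchy_tail a s N) (psi_seq X a s x) \<le> a x (s n)"
    by (simp add: psi_seq_apply x quantale_SUP[OF q] SUP_least)
  then show "t (psi_seq X a s x) (cauchy_tail a s N) \<le> yoneda X a (s n) x"
    using x quantale_commute[OF q] by (simp add: yoneda_apply)
qed

lemma vconverges_yoneda_psi_seq:
  assumes q: "quantale t k" and "vcat t k X a" and sX: "\<And>n. s n \<in> X"
    and cauchy: "k \<le> cauchy_val a s"
  shows "vconverges t k (presheaves t X a) (psh_hom t X) (\<lambda>n. yoneda X a (s n)) (psi_seq X a s)"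
  unfolding vconverges_def vclosure_def
proof (intro allI impI CollectI conjI psi_seq_in_presheaves[OF assms(1-3)])
  fix M :: "nat set" assume M: "infinite M"
  let ?h = "psh_hom t X" and ?y = "\<lambda>n. yoneda X a (s n)" and ?\<psi> = "psi_seq X a s"
  have "k = t k k"
    using quantale_unit[OF q] by simp
  also have "\<dots> \<le> t (SUP N. cauchy_tail a s N) (SUP N'. cauchy_tail a s N')"
    using quantale_mono[OF q cauchy cauchy] by (simp add: cauchy_val_eq_SUP_cauchy_tail)
  also have "\<dots> = (SUP N. SUP N'. t (cauchy_tail a s N) (cauchy_tail a s N'))"
    by (rule quantale_SUP_SUP[OF q])
  also have "\<dots> \<le> (SUP z\<in>?y ` M. t (?h ?\<psi> z) (?h z ?\<psi>))"
  proof (intro SUP_least)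
    fix N N'
    obtain n where n: "n \<in> M" "max N N' \<le> n"
      using M unfolding infinite_nat_iff_unbounded_le by blast
    have "cauchy_tail a s N \<le> ?h ?\<psi> (?y n)"
      using n by (intro order_trans[OF cauchy_tail_mono
            cauchy_tail_le_psh_hom_psi_seq_yoneda[OF assms(1-3), of n n]]) auto
    moreover have "cauchy_tail a s N' \<le> ?h (?y n) ?\<psi>"
      using n by (intro order_trans[OF cauchy_tail_mono
            cauchy_tail_le_psh_hom_yoneda_psi_seq[OF assms(1-3), of n n]]) auto
    ultimately have "t (cauchy_tail a s N) (cauchy_tail a s N') \<le> t (?h ?\<psi> (?y n)) (?h (?y n) ?\<psi>)"
      by (rule quantale_mono[OF q])
    also have "\<dots> \<le> (SUP z\<in>?y ` M. t (?h ?\<psi> z) (?h z ?\<psi>))"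
      using n by (auto intro: SUP_upper)
    finally show "t (cauchy_tail a s N) (cauchy_tail a s N') \<le> \<dots>" .
  qed
  finally show "k \<le> (SUP z\<in>?y ` M. t (?h ?\<psi> z) (?h z ?\<psi>))" .
qed

lemma vconverges_yoneda_unique:
  assumes q: "quantale t k" and "vcat t k X a" and sX: "\<And>n. s n \<in> X"
    and cauchy: "k \<le> cauchy_val a s" and top: "k = top"
    and \<psi>: "\<psi> \<in> presheaves t X a"
    and conv: "vconverges t k (presheaves t X a) (psh_hom t X) (\<lambda>n. yoneda X a (s n)) \<psi>"
  shows "\<psi> = psi_seq X a s"
proof (rule presheaves_eqI[OF q top \<psi> psi_seq_in_presheaves[OF assms(1-3)]])
  let ?h = "psh_hom t X" and ?y = "\<lambda>n. yoneda X a (s n)" and ?\<psi> = "psi_seq X a s"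
  note tails = vconverges_top_SUP_tail[OF q top conv]
  have "cauchy_tail a s N \<le> ?h \<psi> ?\<psi>" for N
  proof -
    have "cauchy_tail a s N \<le> (SUP n\<in>{N..}. t (?h \<psi> (?y n)) (?h (?y n) ?\<psi>))"
      by (intro le_SUP_tensor_if_SUP_top[OF q top tails(1)]
          cauchy_tail_le_psh_hom_yoneda_psi_seq[OF assms(1-3)]) simp
    also have "\<dots> \<le> ?h \<psi> ?\<psi>"
      by (intro SUP_least psh_hom_trans[OF q])
    finally show ?thesis .
  qed
  then show "?h \<psi> ?\<psi> = top"
    using cauchy top by (metis SUP_least cauchy_val_eq_SUP_cauchy_tail order_trans top_le)
  have "cauchy_tail a s N \<le> ?h ?\<psi> \<psi>" for N
  proof -
    have "cauchy_tail a s N \<le> (SUP n\<in>{N..}. t (?h (?y n) \<psi>) (?h ?\<psi> (?y n)))"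
      by (intro le_SUP_tensor_if_SUP_top[OF q top tails(2)]
          cauchy_tail_le_psh_hom_psi_seq_yoneda[OF assms(1-3)]) simp
    also have "\<dots> \<le> ?h ?\<psi> \<psi>"
      by (intro SUP_least) (metis psh_hom_trans[OF q] quantale_commute[OF q])
    finally show ?thesis .
  qed
  then show "?h ?\<psi> \<psi> = top"
    using cauchy top by (metis SUP_least cauchy_val_eq_SUP_cauchy_tail order_trans top_le)
qed

theorem proposition3p17:
  fixes t :: "'v::complete_lattice \<Rightarrow> 'v \<Rightarrow> 'v" and k :: 'v
    and X :: "'x set" and a :: "'x \<Rightarrow> 'x \<Rightarrow> 'v" and s :: "nat \<Rightarrow> 'x"
  assumes "quantale t k"
    and "vcat t k X a"
    and "\<forall>n. s n \<in> X"
    and "k \<le> cauchy_val a s"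
  shows "vconverges t k (presheaves t X a) (psh_hom t X) (\<lambda>n. yoneda X a (s n)) (psi_seq X a s)
       \<and> (k = top \<longrightarrow> (\<forall>\<psi>\<in>presheaves t X a.
            vconverges t k (presheaves t X a) (psh_hom t X) (\<lambda>n. yoneda X a (s n)) \<psi>
              \<longrightarrow> \<psi> = psi_seq X a s))"
proof -
  have sX: "\<And>n. s n \<in> X"
    using assms(3) by blast
  show ?thesis
    using vconverges_yoneda_unique[OF assms(1,2) sX assms(4)]
    by (intro conjI vconverges_yoneda_psi_seq[OF assms(1,2) sX assms(4)] impI ballI)
qed

end
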